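(* Let $(\alpha_1,\alpha_2)\in\mathbb{C}^2$ and $p_1,p_2\in\mathbb{C}[u]\setminus\{0\}$, and let $\mathcal{A}=\mathcal{A}_{\alpha_1,\alpha_2}(p_1,p_2)$ and $\tilde{\mathcal{A}}=\tilde{\mathcal{A}}_{\alpha_1,\alpha_2}(p_1,p_2)$. The following are equivalent: (i) $\mathcal{A}\neq\{0\}$; (ii) the generator $H$ is algebraically independent over $\mathbb{C}$ in $\tilde{\mathcal{A}}$; (iii) $p_1(u+\alpha_2/2)\,p_2(u+\alpha_1/2)=p_1(u-\alpha_2/2)\,p_2(u-\alpha_1/2)$ in $\mathbb{C}[u]$.
   Context: $\tilde{\mathcal{A}}_{\alpha_1,\alpha_2}(p_1,p_2)$ is the associative $\mathbb{C}$-algebra generated by $H,X_1^\pm,X_2^\pm$ with relations, for $i=1,2$: $HX_i^\pm-X_i^\pm H=\pm\alpha_iX_i^\pm$, $X_i^+X_i^-=p_i(H-\alpha_i/2)$, $X_i^-X_i^+=p_i(H+\alpha_i/2)$, and $X_1^+X_2^-=X_2^-X_1^+$, $X_1^-X_2^+=X_2^+X_1^-$. $\mathcal{A}_{\alpha_1,\alpha_2}(p_1,p_2)=\tilde{\mathcal{A}}/\mathcal{I}$ where $\mathcal{I}$ is the ideal of all $a\in\tilde{\mathcal{A}}$ such that $f(H)a=0$ for some nonzero $f\in\mathbb{C}[u]$. *)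

theory Defs
  imports "HOL-Library.Poly_Mapping" "HOL-Computational_Algebra.Polynomial"
begin

text \<open>Free associative unital C-algebra on the generators H, X1+, X1-, X2+, X2-:
  finitely supported complex-valued functions on words (lists of generators),
  with concatenation-convolution product.\<close>

datatype gen = Hg | X1p | X1m | X2p | X2m

type_synonym fa = "gen list \<Rightarrow>\<^sub>0 complex"

definition fa_mult :: "fa \<Rightarrow> fa \<Rightarrow> fa" where
  "fa_mult p q = (\<Sum>u\<in>Poly_Mapping.keys p. \<Sum>v\<in>Poly_Mapping.keys q.
      Poly_Mapping.single (u @ v) (Poly_Mapping.lookup p u * Poly_Mapping.lookup q v))"

definition fa_gen :: "gen \<Rightarrow> fa" where
  "fa_gen g = Poly_Mapping.single [g] 1"

definition fa_one :: fa where
  "fa_one = Poly_Mapping.single [] 1"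

definition fa_const :: "complex \<Rightarrow> fa" where
  "fa_const c = Poly_Mapping.single [] c"

definition fa_polyH :: "complex poly \<Rightarrow> fa" where
  "fa_polyH f = (\<Sum>i\<le>degree f. Poly_Mapping.single (replicate i Hg) (coeff f i))"

inductive_set two_sided_ideal :: "fa set \<Rightarrow> fa set" for R where
  gen: "r \<in> R \<Longrightarrow> r \<in> two_sided_ideal R"
| zero: "0 \<in> two_sided_ideal R"
| add: "a \<in> two_sided_ideal R \<Longrightarrow> b \<in> two_sided_ideal R \<Longrightarrow> a + b \<in> two_sided_ideal R"
| mult_left: "a \<in> two_sided_ideal R \<Longrightarrow> fa_mult x a \<in> two_sided_ideal R"
| mult_right: "a \<in> two_sided_ideal R \<Longrightarrow> fa_mult a x \<in> two_sided_ideal R"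

text \<open>Relations for one index i (generators xp = X_i^+, xm = X_i^-).
  Each relation is encoded as lhs - rhs.\<close>
definition rels_i :: "gen \<Rightarrow> gen \<Rightarrow> complex \<Rightarrow> complex poly \<Rightarrow> fa set" where
  "rels_i xp xm \<alpha> p =
    { fa_mult (fa_gen Hg) (fa_gen xp) - fa_mult (fa_gen xp) (fa_gen Hg) - fa_mult (fa_const \<alpha>) (fa_gen xp),
      fa_mult (fa_gen Hg) (fa_gen xm) - fa_mult (fa_gen xm) (fa_gen Hg) + fa_mult (fa_const \<alpha>) (fa_gen xm),
      fa_mult (fa_gen xp) (fa_gen xm) - fa_polyH (pcompose p [:- \<alpha> / 2, 1:]),
      fa_mult (fa_gen xm) (fa_gen xp) - fa_polyH (pcompose p [:\<alpha> / 2, 1:]) }"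

definition rels :: "complex \<Rightarrow> complex \<Rightarrow> complex poly \<Rightarrow> complex poly \<Rightarrow> fa set" where
  "rels \<alpha>1 \<alpha>2 p1 p2 =
     rels_i X1p X1m \<alpha>1 p1 \<union> rels_i X2p X2m \<alpha>2 p2 \<union>
     { fa_mult (fa_gen X1p) (fa_gen X2m) - fa_mult (fa_gen X2m) (fa_gen X1p),
       fa_mult (fa_gen X1m) (fa_gen X2p) - fa_mult (fa_gen X2p) (fa_gen X1m) }"

definition Atilde_zero :: "complex \<Rightarrow> complex \<Rightarrow> complex poly \<Rightarrow> complex poly \<Rightarrow> fa \<Rightarrow> bool" where
  "Atilde_zero \<alpha>1 \<alpha>2 p1 p2 a \<longleftrightarrow> a \<in> two_sided_ideal (rels \<alpha>1 \<alpha>2 p1 p2)"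

text \<open>Preimage in the free algebra of the ideal I = {a | f(H) a = 0 for some f \<noteq> 0} of tilde-A.\<close>
definition calI :: "complex \<Rightarrow> complex \<Rightarrow> complex poly \<Rightarrow> complex poly \<Rightarrow> fa set" where
  "calI \<alpha>1 \<alpha>2 p1 p2 = {a. \<exists>f. f \<noteq> 0 \<and> Atilde_zero \<alpha>1 \<alpha>2 p1 p2 (fa_mult (fa_polyH f) a)}"

text \<open>A = tilde-A / I is nonzero iff I is not all of tilde-A.\<close>
definition A_nonzero :: "complex \<Rightarrow> complex \<Rightarrow> complex poly \<Rightarrow> complex poly \<Rightarrow> bool" where
  "A_nonzero \<alpha>1 \<alpha>2 p1 p2 \<longleftrightarrow> (\<exists>a. a \<notin> calI \<alpha>1 \<alpha>2 p1 p2)"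

definition H_alg_indep :: "complex \<Rightarrow> complex \<Rightarrow> complex poly \<Rightarrow> complex poly \<Rightarrow> bool" where
  "H_alg_indep \<alpha>1 \<alpha>2 p1 p2 \<longleftrightarrow> (\<forall>f. f \<noteq> 0 \<longrightarrow> \<not> Atilde_zero \<alpha>1 \<alpha>2 p1 p2 (fa_polyH f))"

end

theory Submission
  imports Defs
begin

text \<open>The relations give X_i^\<plusminus> H = (H \<mp> \<alpha>_i) X_i^\<plusminus>, so a polynomial f(H)
  passes X_i^\<plusminus> as f(H \<mp> \<alpha>_i). Reducing the word X1^- X2^+ X2^- X1^+ in two ways --
  contracting X2^+ X2^- first, or first moving X1^- past X2^+ and X2^- past X1^+ and then
  contracting X1^- X1^+ -- yields two polynomials in H whose difference is, up to a shift of the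
  variable, the difference of the two sides of (iii). Hence (ii) implies (iii).
  Conversely, let H act on functions \<complex> \<rightarrow> \<complex> as multiplication by z and X_i^\<plusminus> as
  weighted shifts \<psi> \<mapsto> w(z) \<psi>(z \<mp> \<alpha>_i). The weights can be chosen so that every
  relation holds except possibly the commutation of X1^- with X2^+, and that one is exactly (iii).
  Then f(H) sends the constant function 1 to f, so f(H) = 0 forces f = 0.
  Finally, the ideal I is proper iff 1 \<notin> I, i.e. iff no f(H) with f \<noteq> 0 vanishes.\<close>

text \<open>With concatenation as addition, words form a monoid; Poly_Mapping's convolution then
  makes fa the monoid ring, whose product is fa_mult.\<close>

instantiation list :: (type) monoid_add
begin
definition zero_list :: "'a list" where "zero_list = []"
definition plus_list :: "'a list \<Rightarrow> 'a list \<Rightarrow> 'a list" where "plus_list = append"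
instance by standard (auto simp: zero_list_def plus_list_def)
end

lemma poly_mapping_sum_single_lookup:
  "(\<Sum>k\<in>Poly_Mapping.keys p. Poly_Mapping.single k (Poly_Mapping.lookup p k)) = p"
  by (rule poly_mapping_eqI) (auto simp: lookup_sum lookup_single when_def in_keys_iff)

lemma fa_mult_eq_times: "fa_mult p q = p * q"
proof -
  have "p * q = (\<Sum>u\<in>Poly_Mapping.keys p. Poly_Mapping.single u (Poly_Mapping.lookup p u)) *
      (\<Sum>v\<in>Poly_Mapping.keys q. Poly_Mapping.single v (Poly_Mapping.lookup q v))"
    by (simp add: poly_mapping_sum_single_lookup)
  then show ?thesis
    by (simp add: fa_mult_def sum_distrib_left sum_distrib_right mult_single plus_list_def
        sum.swap[of _ "Poly_Mapping.keys q"])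
qed

lemma fa_const_eq_single_0: "fa_const c = Poly_Mapping.single 0 c"
  by (simp add: fa_const_def zero_list_def)

lemma fa_const_add: "fa_const (a + b) = fa_const a + fa_const b"
  by (simp add: fa_const_eq_single_0 single_add)

lemma fa_const_mult: "fa_const (a * b) = fa_const a * fa_const b"
  by (simp add: fa_const_eq_single_0 mult_single)

lemma fa_const_uminus: "fa_const (- c) = - fa_const c"
  by (simp add: fa_const_eq_single_0 single_uminus)

lemma fa_const_0 [simp]: "fa_const 0 = 0"
  by (simp add: fa_const_eq_single_0)

lemma fa_const_1 [simp]: "fa_const 1 = 1"
  by (simp add: fa_const_eq_single_0)

lemma fa_const_central: "fa_const c * x = x * fa_const c"
proof -
  have "fa_const c * Poly_Mapping.single w b = Poly_Mapping.single w b * fa_const c" for w b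
    by (simp add: fa_const_eq_single_0 mult_single mult.commute)
  then show ?thesis
    by (metis (no_types, lifting) poly_mapping_sum_single_lookup sum.cong sum_distrib_left sum_distrib_right)
qed

abbreviation fa_H :: fa where "fa_H \<equiv> fa_gen Hg"

lemma fa_H_power: "fa_H ^ i = Poly_Mapping.single (replicate i Hg) 1"
  by (induction i) (simp_all add: fa_gen_def mult_single plus_list_def zero_list_def flip: single_one)

lemma fa_polyH_as_sum:
  assumes "degree f \<le> N"
  shows "fa_polyH f = (\<Sum>i\<le>N. fa_const (coeff f i) * fa_H ^ i)"
  unfolding fa_polyH_def fa_H_power fa_const_eq_single_0 mult_single
  using assms by (simp add: zero_list_def plus_list_def)
    (intro sum.mono_neutral_left; auto simp: coeff_eq_0)

lemma fa_polyH_0 [simp]: "fa_polyH 0 = 0"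
  by (simp add: fa_polyH_def)

lemma fa_polyH_const: "fa_polyH [:a:] = fa_const a"
  by (simp add: fa_polyH_def fa_const_def)

lemma fa_polyH_add: "fa_polyH (f + g) = fa_polyH f + fa_polyH g"
proof -
  let ?N = "max (degree f) (degree g)"
  have "degree (f + g) \<le> ?N" by (rule degree_add_le_max)
  then show ?thesis
    by (simp add: fa_polyH_as_sum[of _ ?N] fa_const_add distrib_right sum.distrib)
qed

lemma fa_polyH_diff: "fa_polyH (f - g) = fa_polyH f - fa_polyH g"
  by (metis add_diff_cancel diff_add_cancel fa_polyH_add)

lemma fa_polyH_smult: "fa_polyH (smult a f) = fa_const a * fa_polyH f"
  by (simp add: fa_polyH_as_sum[of _ "degree f"] fa_const_mult sum_distrib_left mult.assoc)

lemma fa_polyH_pCons: "fa_polyH (pCons a f) = fa_const a + fa_H * fa_polyH f"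
proof -
  have "fa_polyH (pCons a f) = (\<Sum>i\<le>Suc (degree f). fa_const (coeff (pCons a f) i) * fa_H ^ i)"
    by (rule fa_polyH_as_sum) (simp add: degree_pCons_le)
  also have "\<dots> = fa_const a + (\<Sum>i\<le>degree f. fa_const (coeff f i) * fa_H ^ Suc i)"
    by (simp only: sum.atMost_Suc_shift coeff_pCons_0 coeff_pCons_Suc power_0 mult_1_right)
  also have "\<dots> = fa_const a + fa_H * fa_polyH f"
  proof -
    have "fa_H * (fa_const c * fa_H ^ i) = fa_const c * fa_H ^ Suc i" for c i
      by (simp only: fa_const_central[of c] power_Suc mult.assoc)
    then show ?thesis
      by (simp only: fa_polyH_as_sum[of f "degree f", OF order_refl] sum_distrib_left)
  qed
  finally show ?thesis .
qed

lemma fa_polyH_linear: "fa_polyH [:c, 1:] = fa_const c + fa_H"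
  by (simp add: fa_polyH_pCons fa_polyH_const)

lemma fa_polyH_mult: "fa_polyH (f * g) = fa_polyH f * fa_polyH g"
proof (induction f rule: pCons_induct)
  case (pCons a f)
  have "pCons a f * g = smult a g + pCons 0 (f * g)"
    by (simp add: mult_pCons_left)
  then show ?case
    by (simp add: fa_polyH_add fa_polyH_smult fa_polyH_pCons pCons.IH distrib_right mult.assoc)
qed simp

lemma two_sided_ideal_mult_left: "a \<in> two_sided_ideal R \<Longrightarrow> x * a \<in> two_sided_ideal R"
  by (metis two_sided_ideal.mult_left fa_mult_eq_times)

lemma two_sided_ideal_mult_right: "a \<in> two_sided_ideal R \<Longrightarrow> a * x \<in> two_sided_ideal R"
  by (metis two_sided_ideal.mult_right fa_mult_eq_times)

lemma two_sided_ideal_uminus: "a \<in> two_sided_ideal R \<Longrightarrow> - a \<in> two_sided_ideal R"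
  using two_sided_ideal_mult_left[of a R "fa_const (- 1)"] by (simp add: fa_const_uminus)

definition ideal_cong :: "fa set \<Rightarrow> fa \<Rightarrow> fa \<Rightarrow> bool" where
  "ideal_cong R a b \<longleftrightarrow> a - b \<in> two_sided_ideal R"

lemma ideal_cong_refl: "ideal_cong R a a"
  by (simp add: ideal_cong_def two_sided_ideal.zero)

lemma ideal_cong_sym: "ideal_cong R a b \<Longrightarrow> ideal_cong R b a"
  unfolding ideal_cong_def by (metis two_sided_ideal_uminus minus_diff_eq)

lemma ideal_cong_trans [trans]:
  assumes "ideal_cong R a b" and "ideal_cong R b c"
  shows "ideal_cong R a c"
proof -
  have "(a - b) + (b - c) \<in> two_sided_ideal R"
    using assms unfolding ideal_cong_def by (rule two_sided_ideal.add)
  then show ?thesis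
    unfolding ideal_cong_def by simp
qed

lemma ideal_cong_add: "ideal_cong R a b \<Longrightarrow> ideal_cong R c d \<Longrightarrow> ideal_cong R (a + c) (b + d)"
  unfolding ideal_cong_def by (metis two_sided_ideal.add add_diff_add)

lemma ideal_cong_mult_left: "ideal_cong R a b \<Longrightarrow> ideal_cong R (x * a) (x * b)"
  unfolding ideal_cong_def by (metis two_sided_ideal_mult_left right_diff_distrib)

lemma ideal_cong_mult_right: "ideal_cong R a b \<Longrightarrow> ideal_cong R (a * x) (b * x)"
  unfolding ideal_cong_def by (metis two_sided_ideal_mult_right left_diff_distrib)

lemma ideal_cong_mult: "ideal_cong R a b \<Longrightarrow> ideal_cong R c d \<Longrightarrow> ideal_cong R (a * c) (b * d)"
  by (rule ideal_cong_trans[OF ideal_cong_mult_right ideal_cong_mult_left])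

lemma ideal_cong_of_generator: "a - b \<in> R \<Longrightarrow> ideal_cong R a b"
  unfolding ideal_cong_def by (rule two_sided_ideal.gen)

lemma ideal_cong_commute_polyH:
  assumes "ideal_cong R (X * fa_H) (fa_polyH [:c, 1:] * X)"
  shows "ideal_cong R (X * fa_polyH f) (fa_polyH (pcompose f [:c, 1:]) * X)"
proof (induction f rule: pCons_induct)
  case (pCons a f)
  let ?L = "fa_polyH [:c, 1:]" and ?F = "fa_polyH f" and ?F' = "fa_polyH (pcompose f [:c, 1:])"
  have "X * fa_polyH (pCons a f) = fa_const a * X + (X * fa_H) * ?F"
    by (simp add: fa_polyH_pCons distrib_left mult.assoc fa_const_central)
  also have "ideal_cong R \<dots> (fa_const a * X + ?L * (?F' * X))"
  proof (rule ideal_cong_add[OF ideal_cong_refl])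
    have "ideal_cong R ((X * fa_H) * ?F) (?L * (X * ?F))"
      using ideal_cong_mult_right[OF assms] by (simp only: mult.assoc)
    also have "ideal_cong R \<dots> (?L * (?F' * X))"
      by (rule ideal_cong_mult_left[OF pCons.IH])
    finally show "ideal_cong R ((X * fa_H) * ?F) (?L * (?F' * X))" .
  qed
  also have "fa_const a * X + ?L * (?F' * X) = fa_polyH (pcompose (pCons a f) [:c, 1:]) * X"
    by (simp only: pcompose_pCons fa_polyH_add fa_polyH_const fa_polyH_mult distrib_right mult.assoc)
  finally show ?case .
qed (simp add: ideal_cong_refl)

lemma shift_identity_iff:
  fixes p1 p2 :: "'a::field_char_0 poly"
  shows "pcompose p1 [:a2 / 2, 1:] * pcompose p2 [:a1 / 2, 1:] =
           pcompose p1 [:- a2 / 2, 1:] * pcompose p2 [:- a1 / 2, 1:] \<longleftrightarrow>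
         (\<forall>z. poly p1 (z + a2 / 2) * poly p2 (z + a1 / 2) =
              poly p1 (z - a2 / 2) * poly p2 (z - a1 / 2))"
  by (simp add: poly_eq_poly_eq_iff[symmetric] fun_eq_iff poly_pcompose algebra_simps)

lemma pcompose_shift_shift:
  fixes p :: "'a::comm_semiring_1 poly"
  shows "pcompose (pcompose p [:a, 1:]) [:b, 1:] = pcompose p [:a + b, 1:]"
proof -
  have "pcompose [:a, 1:] [:b, 1:] = [:a + b, 1:]"
    by (simp add: pcompose_pCons)
  then show ?thesis
    by (metis pcompose_assoc)
qed

lemma ideal_cong_of_commutation_relation:
  assumes "fa_H * X - X * fa_H + fa_const c * X \<in> R"
  shows "ideal_cong R (X * fa_H) (fa_polyH [:c, 1:] * X)"
proof -
  have "X * fa_H - fa_polyH [:c, 1:] * X = - (fa_H * X - X * fa_H + fa_const c * X)"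
    by (simp add: fa_polyH_linear algebra_simps)
  then show ?thesis
    unfolding ideal_cong_def by (simp only:) (intro two_sided_ideal_uminus two_sided_ideal.gen assms)
qed

lemma rels_congruences:
  fixes \<alpha>1 \<alpha>2 :: complex and p1 p2 :: "complex poly"
  defines "R \<equiv> rels \<alpha>1 \<alpha>2 p1 p2"
  shows "ideal_cong R (fa_gen X1m * fa_H) (fa_polyH [:\<alpha>1, 1:] * fa_gen X1m)"
    and "ideal_cong R (fa_gen X2p * fa_H) (fa_polyH [:- \<alpha>2, 1:] * fa_gen X2p)"
    and "ideal_cong R (fa_gen X1m * fa_gen X1p) (fa_polyH (pcompose p1 [:\<alpha>1 / 2, 1:]))"
    and "ideal_cong R (fa_gen X2p * fa_gen X2m) (fa_polyH (pcompose p2 [:- \<alpha>2 / 2, 1:]))"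
    and "ideal_cong R (fa_gen X1m * fa_gen X2p) (fa_gen X2p * fa_gen X1m)"
    and "ideal_cong R (fa_gen X1p * fa_gen X2m) (fa_gen X2m * fa_gen X1p)"
proof -
  have "r \<in> R" if "r \<in> rels_i X1p X1m \<alpha>1 p1 \<union> rels_i X2p X2m \<alpha>2 p2" for r
    using that by (simp add: R_def rels_def)
  note gens = this[unfolded rels_i_def fa_mult_eq_times, simplified]
  show "ideal_cong R (fa_gen X1m * fa_H) (fa_polyH [:\<alpha>1, 1:] * fa_gen X1m)"
    by (rule ideal_cong_of_commutation_relation) (simp add: gens)
  show "ideal_cong R (fa_gen X2p * fa_H) (fa_polyH [:- \<alpha>2, 1:] * fa_gen X2p)"
    by (rule ideal_cong_of_commutation_relation) (simp add: gens fa_const_uminus)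
  show "ideal_cong R (fa_gen X1m * fa_gen X1p) (fa_polyH (pcompose p1 [:\<alpha>1 / 2, 1:]))"
    and "ideal_cong R (fa_gen X2p * fa_gen X2m) (fa_polyH (pcompose p2 [:- \<alpha>2 / 2, 1:]))"
    and "ideal_cong R (fa_gen X1m * fa_gen X2p) (fa_gen X2p * fa_gen X1m)"
    and "ideal_cong R (fa_gen X1p * fa_gen X2m) (fa_gen X2m * fa_gen X1p)"
    by (auto intro!: ideal_cong_of_generator simp: R_def rels_def rels_i_def fa_mult_eq_times)
qed

lemma fa_polyH_shift_difference_in_ideal:
  fixes \<alpha>1 \<alpha>2 :: complex and p1 p2 :: "complex poly"
  shows "fa_polyH (pcompose p2 [:\<alpha>1 - \<alpha>2 / 2, 1:] * pcompose p1 [:\<alpha>1 / 2, 1:] -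
                   pcompose p1 [:\<alpha>1 / 2 - \<alpha>2, 1:] * pcompose p2 [:- \<alpha>2 / 2, 1:])
         \<in> two_sided_ideal (rels \<alpha>1 \<alpha>2 p1 p2)"
proof -
  define R where "R = rels \<alpha>1 \<alpha>2 p1 p2"
  note cong = rels_congruences[of \<alpha>1 \<alpha>2 p1 p2, folded R_def]
  let ?X1p = "fa_gen X1p" and ?X1m = "fa_gen X1m" and ?X2p = "fa_gen X2p" and ?X2m = "fa_gen X2m"
  let ?P = "pcompose p2 [:- \<alpha>2 / 2, 1:]" and ?P' = "pcompose p2 [:\<alpha>1 - \<alpha>2 / 2, 1:]"
  let ?Q = "pcompose p1 [:\<alpha>1 / 2, 1:]" and ?Q' = "pcompose p1 [:\<alpha>1 / 2 - \<alpha>2, 1:]"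
  have commute_P: "ideal_cong R (?X1m * fa_polyH ?P) (fa_polyH ?P' * ?X1m)"
    using ideal_cong_commute_polyH[OF cong(1), of ?P] by (simp add: pcompose_shift_shift)
  have commute_Q: "ideal_cong R (?X2p * fa_polyH ?Q) (fa_polyH ?Q' * ?X2p)"
    using ideal_cong_commute_polyH[OF cong(2), of ?Q] by (simp add: pcompose_shift_shift)
  have "?X1m * ?X2p * ?X2m * ?X1p = ?X1m * (?X2p * ?X2m) * ?X1p"
    by (simp only: mult.assoc)
  also have "ideal_cong R \<dots> (?X1m * fa_polyH ?P * ?X1p)"
    by (intro ideal_cong_mult_right ideal_cong_mult_left cong(4))
  also have "ideal_cong R \<dots> (fa_polyH ?P' * ?X1m * ?X1p)"
    by (intro ideal_cong_mult_right commute_P)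
  also have "\<dots> = fa_polyH ?P' * (?X1m * ?X1p)"
    by (simp only: mult.assoc)
  also have "ideal_cong R \<dots> (fa_polyH ?P' * fa_polyH ?Q)"
    by (intro ideal_cong_mult_left cong(3))
  finally have contract_X2_first: "ideal_cong R (?X1m * ?X2p * ?X2m * ?X1p) (fa_polyH ?P' * fa_polyH ?Q)" .
  have "?X1m * ?X2p * ?X2m * ?X1p = (?X1m * ?X2p) * (?X2m * ?X1p)"
    by (simp only: mult.assoc)
  also have "ideal_cong R \<dots> ((?X2p * ?X1m) * (?X1p * ?X2m))"
    by (intro ideal_cong_mult cong(5) ideal_cong_sym[OF cong(6)])
  also have "\<dots> = ?X2p * (?X1m * ?X1p) * ?X2m"
    by (simp only: mult.assoc)
  also have "ideal_cong R \<dots> (?X2p * fa_polyH ?Q * ?X2m)"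
    by (intro ideal_cong_mult_right ideal_cong_mult_left cong(3))
  also have "ideal_cong R \<dots> (fa_polyH ?Q' * ?X2p * ?X2m)"
    by (intro ideal_cong_mult_right commute_Q)
  also have "\<dots> = fa_polyH ?Q' * (?X2p * ?X2m)"
    by (simp only: mult.assoc)
  also have "ideal_cong R \<dots> (fa_polyH ?Q' * fa_polyH ?P)"
    by (intro ideal_cong_mult_left cong(4))
  finally have contract_X1_first: "ideal_cong R (?X1m * ?X2p * ?X2m * ?X1p) (fa_polyH ?Q' * fa_polyH ?P)" .
  have "ideal_cong R (fa_polyH ?P' * fa_polyH ?Q) (fa_polyH ?Q' * fa_polyH ?P)"
    using ideal_cong_trans[OF ideal_cong_sym[OF contract_X2_first] contract_X1_first] .
  then show ?thesis
    by (simp add: ideal_cong_def R_def fa_polyH_diff fa_polyH_mult)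
qed

lemma shift_identity_if_H_alg_indep:
  fixes \<alpha>1 \<alpha>2 :: complex and p1 p2 :: "complex poly"
  assumes "H_alg_indep \<alpha>1 \<alpha>2 p1 p2"
  shows "pcompose p1 [:\<alpha>2 / 2, 1:] * pcompose p2 [:\<alpha>1 / 2, 1:] =
           pcompose p1 [:- \<alpha>2 / 2, 1:] * pcompose p2 [:- \<alpha>1 / 2, 1:]"
proof -
  let ?D = "pcompose p2 [:\<alpha>1 - \<alpha>2 / 2, 1:] * pcompose p1 [:\<alpha>1 / 2, 1:] -
            pcompose p1 [:\<alpha>1 / 2 - \<alpha>2, 1:] * pcompose p2 [:- \<alpha>2 / 2, 1:]"
  have "?D = 0"
    using assms fa_polyH_shift_difference_in_ideal unfolding H_alg_indep_def Atilde_zero_def by blast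
  then have "poly ?D (z - \<alpha>1 / 2 + \<alpha>2 / 2) = 0" for z
    by simp
  then show ?thesis
    unfolding shift_identity_iff by (simp add: poly_pcompose algebra_simps)
qed

context
  fixes weight :: "gen \<Rightarrow> complex \<Rightarrow> complex" and shift :: "gen \<Rightarrow> complex"
begin

primrec word_op :: "gen list \<Rightarrow> (complex \<Rightarrow> complex) \<Rightarrow> complex \<Rightarrow> complex" where
  "word_op [] \<psi> = \<psi>"
| "word_op (g # w) \<psi> = (\<lambda>z. weight g z * word_op w \<psi> (z + shift g))"

definition fa_act :: "fa \<Rightarrow> (complex \<Rightarrow> complex) \<Rightarrow> complex \<Rightarrow> complex" where
  "fa_act a \<psi> z = (\<Sum>w\<in>Poly_Mapping.keys a. Poly_Mapping.lookup a w * word_op w \<psi> z)"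

lemma word_op_append: "word_op (u @ v) \<psi> = word_op u (word_op v \<psi>)"
  by (induction u) auto

lemma word_op_linear:
  "word_op w (\<lambda>z. \<Sum>v\<in>S. c v * F v z) z = (\<Sum>v\<in>S. c v * word_op w (F v) z)"
  by (induction w arbitrary: z) (auto simp: sum_distrib_left mult.left_commute)

lemma word_op_zero: "word_op w (\<lambda>_. 0) z = 0"
  by (induction w arbitrary: z) auto

lemma fa_act_superset:
  assumes "finite S" and "Poly_Mapping.keys a \<subseteq> S"
  shows "fa_act a \<psi> z = (\<Sum>w\<in>S. Poly_Mapping.lookup a w * word_op w \<psi> z)"
  unfolding fa_act_def using assms
  by (intro sum.mono_neutral_left) (auto simp: in_keys_iff)

lemma fa_act_zero: "fa_act 0 \<psi> z = 0"
  by (simp add: fa_act_def)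

lemma fa_act_add: "fa_act (a + b) \<psi> z = fa_act a \<psi> z + fa_act b \<psi> z"
proof -
  let ?S = "Poly_Mapping.keys a \<union> Poly_Mapping.keys b"
  have "fa_act (a + b) \<psi> z = (\<Sum>w\<in>?S. Poly_Mapping.lookup (a + b) w * word_op w \<psi> z)"
    by (rule fa_act_superset) (simp_all add: keys_add)
  also have "\<dots> = (\<Sum>w\<in>?S. Poly_Mapping.lookup a w * word_op w \<psi> z) +
                  (\<Sum>w\<in>?S. Poly_Mapping.lookup b w * word_op w \<psi> z)"
    by (simp add: lookup_add distrib_right sum.distrib)
  also have "\<dots> = fa_act a \<psi> z + fa_act b \<psi> z"
    using fa_act_superset[of ?S a] fa_act_superset[of ?S b] by simp
  finally show ?thesis .
qed

lemma fa_act_diff: "fa_act (a - b) \<psi> z = fa_act a \<psi> z - fa_act b \<psi> z"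
  using fa_act_add[of "a - b" b] by simp

lemma fa_act_single: "fa_act (Poly_Mapping.single w c) \<psi> z = c * word_op w \<psi> z"
  by (simp add: fa_act_def)

lemma fa_act_sum: "fa_act (\<Sum>i\<in>I. a i) \<psi> z = (\<Sum>i\<in>I. fa_act (a i) \<psi> z)"
  by (induction I rule: infinite_finite_induct) (simp_all add: fa_act_zero fa_act_add)

lemma fa_act_mult: "fa_act (a * b) \<psi> z = fa_act a (fa_act b \<psi>) z"
proof -
  have "fa_act (a * b) \<psi> z = (\<Sum>u\<in>Poly_Mapping.keys a. \<Sum>v\<in>Poly_Mapping.keys b.
      Poly_Mapping.lookup a u * Poly_Mapping.lookup b v * word_op (u @ v) \<psi> z)"
    unfolding fa_mult_eq_times[symmetric] fa_mult_def by (simp add: fa_act_sum fa_act_single)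
  also have "\<dots> = fa_act a (fa_act b \<psi>) z"
    unfolding fa_act_def[abs_def] word_op_linear
    by (simp add: word_op_append sum_distrib_left mult.assoc)
  finally show ?thesis .
qed

lemma fa_act_gen: "fa_act (fa_gen g) \<psi> z = weight g z * \<psi> (z + shift g)"
  by (simp add: fa_gen_def fa_act_single)

lemma fa_act_const: "fa_act (fa_const c) \<psi> z = c * \<psi> z"
  by (simp add: fa_const_def fa_act_single)

lemma fa_act_polyH:
  assumes "weight Hg = (\<lambda>z. z)" and "shift Hg = 0"
  shows "fa_act (fa_polyH f) \<psi> z = poly f z * \<psi> z"
proof -
  have "word_op (replicate i Hg) \<psi> z = z ^ i * \<psi> z" for i
    using assms by (induction i) auto
  then show ?thesis
    by (simp add: fa_polyH_def fa_act_sum fa_act_single poly_altdef sum_distrib_right mult.assoc)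
qed

lemma fa_act_vanishes_on_ideal:
  assumes "\<And>r \<psi> z. r \<in> R \<Longrightarrow> fa_act r \<psi> z = 0"
  shows "a \<in> two_sided_ideal R \<Longrightarrow> fa_act a \<psi> z = 0"
proof (induction arbitrary: \<psi> z rule: two_sided_ideal.induct)
  case (mult_left a x)
  then have "fa_act a \<psi> = (\<lambda>_. 0)" for \<psi>
    by auto
  moreover have "fa_act x (\<lambda>_. 0) z = 0"
    by (simp add: fa_act_def word_op_zero)
  ultimately show ?case
    by (simp add: fa_mult_eq_times fa_act_mult)
qed (simp_all add: assms fa_act_zero fa_act_add fa_mult_eq_times fa_act_mult)

end

text \<open>The weights make X1^-X1^+ and X2^+X2^- act by
  p1(z + \<alpha>1/2) and p2(z - \<alpha>2/2); the two commutation relations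
  then differ only where X1^- meets X2^+, which is where (iii) enters.\<close>

fun rep_weight :: "complex \<Rightarrow> complex \<Rightarrow> complex poly \<Rightarrow> complex poly \<Rightarrow> gen \<Rightarrow> complex \<Rightarrow> complex" where
  "rep_weight \<alpha>1 \<alpha>2 p1 p2 Hg z = z"
| "rep_weight \<alpha>1 \<alpha>2 p1 p2 X1p z = 1"
| "rep_weight \<alpha>1 \<alpha>2 p1 p2 X1m z = poly p1 (z + \<alpha>1 / 2)"
| "rep_weight \<alpha>1 \<alpha>2 p1 p2 X2p z = poly p2 (z - \<alpha>2 / 2)"
| "rep_weight \<alpha>1 \<alpha>2 p1 p2 X2m z = 1"

fun rep_shift :: "complex \<Rightarrow> complex \<Rightarrow> gen \<Rightarrow> complex" where
  "rep_shift \<alpha>1 \<alpha>2 Hg = 0"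
| "rep_shift \<alpha>1 \<alpha>2 X1p = - \<alpha>1"
| "rep_shift \<alpha>1 \<alpha>2 X1m = \<alpha>1"
| "rep_shift \<alpha>1 \<alpha>2 X2p = - \<alpha>2"
| "rep_shift \<alpha>1 \<alpha>2 X2m = \<alpha>2"

lemma rep_act_polyH:
  "fa_act (rep_weight \<alpha>1 \<alpha>2 p1 p2) (rep_shift \<alpha>1 \<alpha>2) (fa_polyH f) \<psi> z = poly f z * \<psi> z"
  by (rule fa_act_polyH) (simp_all add: fun_eq_iff)

lemma rep_annihilates_rels:
  fixes \<alpha>1 \<alpha>2 :: complex and p1 p2 :: "complex poly"
  assumes "pcompose p1 [:\<alpha>2 / 2, 1:] * pcompose p2 [:\<alpha>1 / 2, 1:] =
             pcompose p1 [:- \<alpha>2 / 2, 1:] * pcompose p2 [:- \<alpha>1 / 2, 1:]"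
    and "r \<in> rels \<alpha>1 \<alpha>2 p1 p2"
  shows "fa_act (rep_weight \<alpha>1 \<alpha>2 p1 p2) (rep_shift \<alpha>1 \<alpha>2) r \<psi> z = 0"
proof -
  have shifted_identity: "poly p1 (z + \<alpha>1 / 2) * poly p2 (\<alpha>1 + z - \<alpha>2 / 2) =
        poly p2 (z - \<alpha>2 / 2) * poly p1 (z + \<alpha>1 / 2 - \<alpha>2)" for z
    using assms(1)[unfolded shift_identity_iff, rule_format, of "z + \<alpha>1 / 2 - \<alpha>2 / 2"]
    by (simp add: algebra_simps)
  from assms(2) show ?thesis
    unfolding rels_def rels_i_def fa_mult_eq_times
    by (elim UnE insertE emptyE; hypsubst)
      (simp_all add: fa_act_diff fa_act_add fa_act_mult fa_act_gen fa_act_const rep_act_polyH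
        poly_pcompose algebra_simps shifted_identity)
qed

lemma H_alg_indep_if_shift_identity:
  fixes \<alpha>1 \<alpha>2 :: complex and p1 p2 :: "complex poly"
  assumes "pcompose p1 [:\<alpha>2 / 2, 1:] * pcompose p2 [:\<alpha>1 / 2, 1:] =
             pcompose p1 [:- \<alpha>2 / 2, 1:] * pcompose p2 [:- \<alpha>1 / 2, 1:]"
  shows "H_alg_indep \<alpha>1 \<alpha>2 p1 p2"
  unfolding H_alg_indep_def Atilde_zero_def
proof (intro allI impI notI)
  fix f :: "complex poly"
  assume "f \<noteq> 0" and "fa_polyH f \<in> two_sided_ideal (rels \<alpha>1 \<alpha>2 p1 p2)"
  then have "fa_act (rep_weight \<alpha>1 \<alpha>2 p1 p2) (rep_shift \<alpha>1 \<alpha>2) (fa_polyH f) (\<lambda>_. 1) z = 0" for z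
    using fa_act_vanishes_on_ideal rep_annihilates_rels[OF assms] by blast
  then have "poly f z = 0" for z
    by (simp add: rep_act_polyH)
  with \<open>f \<noteq> 0\<close> show False
    using poly_all_0_iff_0 by blast
qed

lemma A_nonzero_iff_H_alg_indep: "A_nonzero \<alpha>1 \<alpha>2 p1 p2 \<longleftrightarrow> H_alg_indep \<alpha>1 \<alpha>2 p1 p2"
proof
  assume "A_nonzero \<alpha>1 \<alpha>2 p1 p2"
  then obtain a where "\<And>f. f \<noteq> 0 \<Longrightarrow> fa_polyH f * a \<notin> two_sided_ideal (rels \<alpha>1 \<alpha>2 p1 p2)"
    unfolding A_nonzero_def calI_def Atilde_zero_def fa_mult_eq_times by blast
  then show "H_alg_indep \<alpha>1 \<alpha>2 p1 p2"
    unfolding H_alg_indep_def Atilde_zero_def using two_sided_ideal_mult_right by blast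
next
  assume "H_alg_indep \<alpha>1 \<alpha>2 p1 p2"
  then have "1 \<notin> calI \<alpha>1 \<alpha>2 p1 p2"
    unfolding H_alg_indep_def calI_def Atilde_zero_def fa_mult_eq_times by auto
  then show "A_nonzero \<alpha>1 \<alpha>2 p1 p2"
    unfolding A_nonzero_def by blast
qed

theorem mainTheorem4:
  fixes \<alpha>1 \<alpha>2 :: complex and p1 p2 :: "complex poly"
  assumes "p1 \<noteq> 0" and "p2 \<noteq> 0"
  shows "(A_nonzero \<alpha>1 \<alpha>2 p1 p2 \<longleftrightarrow> H_alg_indep \<alpha>1 \<alpha>2 p1 p2) \<and>
         (H_alg_indep \<alpha>1 \<alpha>2 p1 p2 \<longleftrightarrow>
            pcompose p1 [:\<alpha>2 / 2, 1:] * pcompose p2 [:\<alpha>1 / 2, 1:] =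
            pcompose p1 [:- \<alpha>2 / 2, 1:] * pcompose p2 [:- \<alpha>1 / 2, 1:])"
  using A_nonzero_iff_H_alg_indep shift_identity_if_H_alg_indep H_alg_indep_if_shift_identity
  by blast

end
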